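(* Let $P$ be a negative-stable standard TSS in decent ntytt format. Then every standard ntytt rule irredundantly provable from $P$ is negative-stable.
   Context: Actions $A\cup\{\tau\}$, $\tau\notin A$. Literals $t\xrightarrow{\alpha}u$ (positive) and $t\not\xrightarrow{\alpha}$ (negative) over terms of a signature $\Sigma$ with infinite variable set $V$. A rule $\frac{H}{\lambda}$ has premises $H$ and conclusion $\lambda$ (source = left term of $\lambda$); it is standard if $\lambda$ is positive; a TSS is standard if all its rules are. Irredundant proof of $\frac{H}{\lambda}$ from $P$: well-founded tree of literals, some leaves marked hypothesis, root $\lambda$, $H$ exactly the hypothesis labels, every non-hypothesis node $\mu$ with children labels $K$ such that $\frac{K}{\mu}$ is a substitution instance of a rule of $P$. ntytt rule: right-hand sides of positive premises are distinct variables not occurring in the source. Free variable: occurs neither in source nor in premise right-hand sides; lookahead: a variable occurs in a premise right-hand side and in a premise left-hand side; decent: no lookahead and no free variables. A standard rule $\frac{H}{t\xrightarrow{\alpha}u}$ is negative-stable if for every premise $w\not\xrightarrow{\gamma}$ in $H$, also $w\not\xrightarrow{\tau}$ is in $H$; a TSS is negative-stable if all its rules are. *)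

theory Defs
  imports Main
begin

datatype ('f, 'v) trm = Var 'v | Fn 'f "('f, 'v) trm list"

fun wf_term :: "('f \<Rightarrow> nat) \<Rightarrow> ('f, 'v) trm \<Rightarrow> bool" where
  "wf_term ar (Var x) = True"
| "wf_term ar (Fn f ts) = (length ts = ar f \<and> (\<forall>t\<in>set ts. wf_term ar t))"

fun vars :: "('f, 'v) trm \<Rightarrow> 'v set" where
  "vars (Var x) = {x}"
| "vars (Fn f ts) = (\<Union>t\<in>set ts. vars t)"

fun subst :: "('v \<Rightarrow> ('f, 'v) trm) \<Rightarrow> ('f, 'v) trm \<Rightarrow> ('f, 'v) trm" where
  "subst \<sigma> (Var x) = \<sigma> x"
| "subst \<sigma> (Fn f ts) = Fn f (map (subst \<sigma>) ts)"

datatype 'a act = Tau | Act 'a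

datatype ('f, 'v, 'a) lit =
    Pos "('f, 'v) trm" "'a act" "('f, 'v) trm"
  | Neg "('f, 'v) trm" "'a act"

fun wf_lit :: "('f \<Rightarrow> nat) \<Rightarrow> ('f, 'v, 'a) lit \<Rightarrow> bool" where
  "wf_lit ar (Pos t \<alpha> u) = (wf_term ar t \<and> wf_term ar u)"
| "wf_lit ar (Neg t \<alpha>) = wf_term ar t"

fun subst_lit :: "('v \<Rightarrow> ('f, 'v) trm) \<Rightarrow> ('f, 'v, 'a) lit \<Rightarrow> ('f, 'v, 'a) lit" where
  "subst_lit \<sigma> (Pos t \<alpha> u) = Pos (subst \<sigma> t) \<alpha> (subst \<sigma> u)"
| "subst_lit \<sigma> (Neg t \<alpha>) = Neg (subst \<sigma> t) \<alpha>"

fun lhs :: "('f, 'v, 'a) lit \<Rightarrow> ('f, 'v) trm" where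
  "lhs (Pos t \<alpha> u) = t"
| "lhs (Neg t \<alpha>) = t"

fun lit_vars :: "('f, 'v, 'a) lit \<Rightarrow> 'v set" where
  "lit_vars (Pos t \<alpha> u) = vars t \<union> vars u"
| "lit_vars (Neg t \<alpha>) = vars t"

fun is_pos :: "('f, 'v, 'a) lit \<Rightarrow> bool" where
  "is_pos (Pos t \<alpha> u) = True"
| "is_pos (Neg t \<alpha>) = False"

type_synonym ('f, 'v, 'a) rule = "('f, 'v, 'a) lit set \<times> ('f, 'v, 'a) lit"
type_synonym ('f, 'v, 'a) tss = "('f, 'v, 'a) rule set"

definition prems :: "('f, 'v, 'a) rule \<Rightarrow> ('f, 'v, 'a) lit set" where
  "prems r = fst r"

definition concl :: "('f, 'v, 'a) rule \<Rightarrow> ('f, 'v, 'a) lit" where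
  "concl r = snd r"

definition source :: "('f, 'v, 'a) rule \<Rightarrow> ('f, 'v) trm" where
  "source r = lhs (concl r)"

definition wf_rule :: "('f \<Rightarrow> nat) \<Rightarrow> ('f, 'v, 'a) rule \<Rightarrow> bool" where
  "wf_rule ar r = ((\<forall>l\<in>prems r. wf_lit ar l) \<and> wf_lit ar (concl r))"

definition standard_rule :: "('f, 'v, 'a) rule \<Rightarrow> bool" where
  "standard_rule r = is_pos (concl r)"

definition standard_tss :: "('f, 'v, 'a) tss \<Rightarrow> bool" where
  "standard_tss P = (\<forall>r\<in>P. standard_rule r)"

definition rhs_vars :: "('f, 'v, 'a) rule \<Rightarrow> 'v set" where
  "rhs_vars r = (\<Union>{vars u | t \<alpha> u. Pos t \<alpha> u \<in> prems r})"

definition lhs_vars :: "('f, 'v, 'a) rule \<Rightarrow> 'v set" where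
  "lhs_vars r = (\<Union>{vars (lhs l) | l. l \<in> prems r})"

definition rule_vars :: "('f, 'v, 'a) rule \<Rightarrow> 'v set" where
  "rule_vars r = lit_vars (concl r) \<union> (\<Union>{lit_vars l | l. l \<in> prems r})"

definition ntytt_rule :: "('f, 'v, 'a) rule \<Rightarrow> bool" where
  "ntytt_rule r =
     ((\<forall>t \<alpha> u. Pos t \<alpha> u \<in> prems r \<longrightarrow> (\<exists>y. u = Var y \<and> y \<notin> vars (source r))) \<and>
      (\<forall>t \<alpha> u t' \<alpha>' u'. Pos t \<alpha> u \<in> prems r \<longrightarrow> Pos t' \<alpha>' u' \<in> prems r \<longrightarrow>
          Pos t \<alpha> u \<noteq> Pos t' \<alpha>' u' \<longrightarrow> u \<noteq> u'))"

definition free_vars :: "('f, 'v, 'a) rule \<Rightarrow> 'v set" where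
  "free_vars r = rule_vars r - (vars (source r) \<union> rhs_vars r)"

definition has_lookahead :: "('f, 'v, 'a) rule \<Rightarrow> bool" where
  "has_lookahead r = (rhs_vars r \<inter> lhs_vars r \<noteq> {})"

definition decent_rule :: "('f, 'v, 'a) rule \<Rightarrow> bool" where
  "decent_rule r = (\<not> has_lookahead r \<and> free_vars r = {})"

definition decent_ntytt_tss :: "('f, 'v, 'a) tss \<Rightarrow> bool" where
  "decent_ntytt_tss P = (\<forall>r\<in>P. decent_rule r \<and> ntytt_rule r)"

definition negative_stable_rule :: "('f, 'v, 'a) rule \<Rightarrow> bool" where
  "negative_stable_rule r =
     (standard_rule r \<and> (\<forall>w \<gamma>. Neg w \<gamma> \<in> prems r \<longrightarrow> Neg w Tau \<in> prems r))"

definition negative_stable_tss :: "('f, 'v, 'a) tss \<Rightarrow> bool" where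
  "negative_stable_tss P = (\<forall>r\<in>P. negative_stable_rule r)"

definition subst_instance :: "('f \<Rightarrow> nat) \<Rightarrow> ('f, 'v, 'a) rule \<Rightarrow> ('f, 'v, 'a) rule \<Rightarrow> bool" where
  "subst_instance ar inst r =
     (\<exists>\<sigma>. (\<forall>x. wf_term ar (\<sigma> x)) \<and>
          prems inst = subst_lit \<sigma> ` prems r \<and> concl inst = subst_lit \<sigma> (concl r))"

text \<open>A proof tree: node set N, root, children function ch, labelling lab, and the set Hy of
  leaves marked as hypotheses.\<close>
definition is_tree :: "'n set \<Rightarrow> 'n \<Rightarrow> ('n \<Rightarrow> 'n set) \<Rightarrow> bool" where
  "is_tree N root ch =
     (root \<in> N \<and> (\<forall>n\<in>N. ch n \<subseteq> N) \<and>
      (\<forall>n\<in>N. (root, n) \<in> {(p, c). p \<in> N \<and> c \<in> ch p}\<^sup>*) \<and>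
      (\<forall>n\<in>N. root \<notin> ch n) \<and>
      (\<forall>c\<in>N. c \<noteq> root \<longrightarrow> (\<exists>!p. p \<in> N \<and> c \<in> ch p)) \<and>
      wf {(c, p). p \<in> N \<and> c \<in> ch p})"

definition irredundant_proof ::
  "('f \<Rightarrow> nat) \<Rightarrow> ('f, 'v, 'a) tss \<Rightarrow> 'n set \<Rightarrow> 'n \<Rightarrow> ('n \<Rightarrow> 'n set) \<Rightarrow>
   ('n \<Rightarrow> ('f, 'v, 'a) lit) \<Rightarrow> 'n set \<Rightarrow> ('f, 'v, 'a) rule \<Rightarrow> bool" where
  "irredundant_proof ar P N root ch lab Hy r =
     (is_tree N root ch \<and>
      (\<forall>n\<in>N. wf_lit ar (lab n)) \<and>
      Hy \<subseteq> N \<and> (\<forall>n\<in>Hy. ch n = {}) \<and>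
      lab root = concl r \<and>
      prems r = lab ` Hy \<and>
      (\<forall>n\<in>N - Hy. \<exists>\<rho>\<in>P. subst_instance ar (lab ` ch n, lab n) \<rho>))"

end

theory Submission
  imports Defs
begin

text \<open>Every inner node of a proof from a standard TSS is labelled by the conclusion of an
  instance of a standard rule, hence positively; so negative literals occur only at
  hypothesis leaves. A negative hypothesis \<open>w \<not>\<longrightarrow>\<^sup>\<gamma>\<close> is a premise of the rule instance
  applied at its parent; negative stability of that rule puts \<open>w \<not>\<longrightarrow>\<^sup>\<tau>\<close> among the
  siblings, and being negative this sibling is again a hypothesis.\<close>

lemma is_pos_subst_lit [simp]: "is_pos (subst_lit \<sigma> l) = is_pos l"
  by (cases l) auto

lemma subst_instance_standard:
  assumes "subst_instance ar inst \<rho>" and "standard_rule \<rho>"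
  shows "standard_rule inst"
  using assms unfolding subst_instance_def standard_rule_def by auto

lemma subst_instance_negative_stable:
  assumes "subst_instance ar (K, \<mu>) \<rho>" and "negative_stable_rule \<rho>" and "Neg w \<gamma> \<in> K"
  shows "Neg w Tau \<in> K"
proof -
  obtain \<sigma> where K: "K = subst_lit \<sigma> ` prems \<rho>"
    using assms(1) unfolding subst_instance_def prems_def by auto
  then obtain l where l: "l \<in> prems \<rho>" "subst_lit \<sigma> l = Neg w \<gamma>"
    using assms(3) by auto
  then obtain w' where w': "l = Neg w' \<gamma>" "subst \<sigma> w' = w"
    by (cases l) auto
  have "Neg w' Tau \<in> prems \<rho>"
    using assms(2) l(1) w'(1) unfolding negative_stable_rule_def by blast
  then have "subst_lit \<sigma> (Neg w' Tau) \<in> K"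
    using K by blast
  then show ?thesis
    using w'(2) by simp
qed

lemma is_tree_has_parent:
  assumes "is_tree N root ch" and "n \<in> N" and "n \<noteq> root"
  obtains p where "p \<in> N" and "n \<in> ch p"
proof -
  have "\<exists>!p. p \<in> N \<and> n \<in> ch p"
    using assms(1) \<open>n \<in> N\<close> \<open>n \<noteq> root\<close> by (simp add: is_tree_def)
  then show ?thesis
    using that by blast
qed

lemma irredundant_proof_negative_label_hyp:
  assumes "irredundant_proof ar P N root ch lab Hy r" and "standard_tss P"
    and "n \<in> N" and "\<not> is_pos (lab n)"
  shows "n \<in> Hy"
proof (rule ccontr)
  assume "n \<notin> Hy"
  moreover have "\<forall>n\<in>N - Hy. \<exists>\<rho>\<in>P. subst_instance ar (lab ` ch n, lab n) \<rho>"
    using assms(1) by (simp add: irredundant_proof_def)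
  ultimately obtain \<rho> where "\<rho> \<in> P" and inst: "subst_instance ar (lab ` ch n, lab n) \<rho>"
    using assms(3) by blast
  then have "standard_rule (lab ` ch n, lab n)"
    using assms(2) subst_instance_standard unfolding standard_tss_def by blast
  with assms(4) show False
    by (simp add: standard_rule_def concl_def)
qed

lemma irredundant_proof_negative_stable:
  assumes irr: "irredundant_proof ar P N root ch lab Hy r"
    and "standard_tss P" and "negative_stable_tss P" and "standard_rule r"
  shows "negative_stable_rule r"
  unfolding negative_stable_rule_def
proof (intro conjI allI impI)
  fix w \<gamma>
  assume "Neg w \<gamma> \<in> prems r"
  have tree: "is_tree N root ch" and Hy: "Hy \<subseteq> N" "\<forall>n\<in>Hy. ch n = {}"
    and prems: "prems r = lab ` Hy" and lab_root: "lab root = concl r"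
    and inner: "\<forall>n\<in>N - Hy. \<exists>\<rho>\<in>P. subst_instance ar (lab ` ch n, lab n) \<rho>"
    using irr unfolding irredundant_proof_def by auto
  obtain h where h: "h \<in> Hy" "lab h = Neg w \<gamma>"
    using \<open>Neg w \<gamma> \<in> prems r\<close> prems by auto
  have "is_pos (lab root)"
    using lab_root \<open>standard_rule r\<close> by (simp add: standard_rule_def)
  then have "h \<noteq> root"
    using h(2) by auto
  moreover have "h \<in> N"
    using h(1) Hy(1) by blast
  ultimately obtain p where p: "p \<in> N" "h \<in> ch p"
    using is_tree_has_parent[OF tree] by blast
  then have "p \<notin> Hy"
    using Hy(2) by auto
  then obtain \<rho> where "\<rho> \<in> P" and inst: "subst_instance ar (lab ` ch p, lab p) \<rho>"
    using inner p(1) by blast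
  have "negative_stable_rule \<rho>"
    using \<open>\<rho> \<in> P\<close> \<open>negative_stable_tss P\<close> by (simp add: negative_stable_tss_def)
  moreover have "Neg w \<gamma> \<in> lab ` ch p"
    using h(2) p(2) by (metis imageI)
  ultimately have "Neg w Tau \<in> lab ` ch p"
    by (rule subst_instance_negative_stable[OF inst])
  then obtain c where c: "c \<in> ch p" "lab c = Neg w Tau"
    by auto
  have "c \<in> N"
    using tree p c(1) by (auto simp: is_tree_def)
  then have "c \<in> Hy"
    using irredundant_proof_negative_label_hyp[OF irr \<open>standard_tss P\<close>] c(2) by simp
  then show "Neg w Tau \<in> prems r"
    using c(2) prems by (metis imageI)
qed (rule \<open>standard_rule r\<close>)

theorem mainTheorem12:
  fixes ar :: "'f \<Rightarrow> nat"
    and P :: "('f, 'v, 'a) tss"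
    and r :: "('f, 'v, 'a) rule"
    and N :: "'n set" and root :: 'n and ch :: "'n \<Rightarrow> 'n set"
    and lab :: "'n \<Rightarrow> ('f, 'v, 'a) lit" and Hy :: "'n set"
  assumes "infinite (UNIV :: 'v set)"
    and "\<forall>\<rho>\<in>P. wf_rule ar \<rho>"
    and "standard_tss P"
    and "negative_stable_tss P"
    and "decent_ntytt_tss P"
    and "wf_rule ar r"
    and "standard_rule r"
    and "ntytt_rule r"
    and "irredundant_proof ar P N root ch lab Hy r"
  shows "negative_stable_rule r"
  using irredundant_proof_negative_stable assms(9,3,4,7) .

end
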